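(* Let $X$ be a real Hilbert space, $r>0$, and let $Z_1,Z_2\subset X$ be non-empty closed $r$-prox-regular sets with $d_H(Z_1,Z_2)<\infty$, and let $0<\delta\le r/2$. Then there exists a constant $C>0$ depending only on $r$ such that for all $y_1,y_2\in X$ with $\mathrm{dist}(y_i,Z_i)\le\delta$, $i=1,2$, $$|\zeta_1-\zeta_2|^2\le C\big(|y_1-y_2|^2+d_H^2(Z_1,Z_2)+d_H(Z_1,Z_2)\big),$$ where $\zeta_i\in Z_i$ is the unique vector in $Z_i$ with $|y_i-\zeta_i|=\mathrm{dist}(y_i,Z_i)$, $i=1,2$.
   Context: $X$ is a real Hilbert space with scalar product $\langle\cdot,\cdot\rangle$ and norm $|\cdot|$; $\mathrm{dist}(x,Z)=\inf_{z\in Z}|x-z|$; $d_H(Z,\hat Z)=\max\{\sup_{z\in Z}\mathrm{dist}(z,\hat Z),\sup_{\hat z\in\hat Z}\mathrm{dist}(\hat z,Z)\}$. A closed connected $Z\subset X$ is $r$-prox-regular if for every $y\in X$ with $\mathrm{dist}(y,Z)=d\in(0,r)$ there is $x\in Z$ with $\mathrm{dist}(x+\frac rd(y-x),Z)=\frac rd|y-x|=r$; for such sets every $y$ with $\mathrm{dist}(y,Z)<r$ has a unique nearest point $x\in Z$, and it satisfies $\langle y-x,x-z\rangle+\frac{|y-x|}{2r}|x-z|^2\ge0$ for all $z\in Z$. *)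

theory Defs
  imports "HOL-Analysis.Analysis"
begin

text \<open>A real Hilbert space is modelled by a type of class real_inner and complete_space.
  dist(x,Z) is the library's infdist x Z.\<close>

definition prox_regular :: "real \<Rightarrow> 'a::real_inner set \<Rightarrow> bool" where
  "prox_regular r Z \<longleftrightarrow> closed Z \<and> connected Z \<and>
     (\<forall>y d. infdist y Z = d \<and> 0 < d \<and> d < r \<longrightarrow>
        (\<exists>x\<in>Z. infdist (x + (r / d) *\<^sub>R (y - x)) Z = (r / d) * norm (y - x)
               \<and> (r / d) * norm (y - x) = r))"

text \<open>Hausdorff distance, extended-real valued (may be infinite; sets need not be bounded).\<close>
definition hausdorff_dist :: "'a::real_normed_vector set \<Rightarrow> 'a set \<Rightarrow> ereal" where
  "hausdorff_dist Z W = max (SUP z\<in>Z. ereal (infdist z W)) (SUP w\<in>W. ereal (infdist w Z))"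

end

theory Submission
  imports Defs
begin

text \<open>Prox-regularity yields the proximal normal inequality
  \<open>2r\<langle>y - \<zeta>, \<zeta> - z\<rangle> + |y - \<zeta>| |\<zeta> - z|\<^sup>2 \<ge> 0\<close> for the nearest point \<open>\<zeta>\<close> of \<open>y\<close> and every
  \<open>z \<in> Z\<close>. Test it for \<open>\<zeta>\<^sub>1\<close> against a point of \<open>Z\<^sub>1\<close> within \<open>2h\<close> of \<open>\<zeta>\<^sub>2\<close>, and for \<open>\<zeta>\<^sub>2\<close>
  against a point of \<open>Z\<^sub>2\<close> within \<open>2h\<close> of \<open>\<zeta>\<^sub>1\<close>, where \<open>h\<close> is the Hausdorff distance (the
  factor 2 because distances to \<open>Z\<^sub>i\<close> need not be attained), and add. The inner products combine to \<open>\<langle>y\<^sub>1 - y\<^sub>2, \<zeta>\<^sub>1 - \<zeta>\<^sub>2\<rangle> - |\<zeta>\<^sub>1 - \<zeta>\<^sub>2|\<^sup>2\<close> up to \<open>O(h)\<close>;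
  since \<open>|y\<^sub>i - \<zeta>\<^sub>i| \<le> r/2\<close>, the quadratic terms absorb only part of \<open>2r|\<zeta>\<^sub>1 - \<zeta>\<^sub>2|\<^sup>2\<close>, and
  what remains is the claimed bound with \<open>C = 48 + 16r\<close>.\<close>

lemma power2_norm_add:
  fixes x y :: "'a::real_inner"
  shows "(norm (x + y))\<^sup>2 = (norm x)\<^sup>2 + 2 * inner x y + (norm y)\<^sup>2"
  by (simp add: power2_norm_eq_inner inner_add inner_commute)

lemma closed_infdist_le_obtain:
  fixes Z :: "'a::real_normed_vector set"
  assumes "closed Z" "Z \<noteq> {}" "infdist p Z \<le> H"
  obtains z where "z \<in> Z" "norm (p - z) \<le> 2 * H"
proof (cases "H = 0")
  case True
  then have "p \<in> Z"
    using assms in_closed_iff_infdist_zero infdist_nonneg[of p Z] by (metis order_antisym)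
  then show ?thesis using True that by simp
next
  case False
  then have "infdist p Z < 2 * H" using assms infdist_nonneg[of p Z] by linarith
  moreover have "bdd_below ((\<lambda>z. dist p z) ` Z)" by (rule bdd_belowI2[of _ 0]) simp
  ultimately obtain z where "z \<in> Z" "dist p z < 2 * H"
    using cINF_less_iff[OF assms(2)] by (metis infdist_notempty[OF assms(2)])
  then show ?thesis using that by (simp add: dist_norm)
qed

lemma hausdorff_dist_commute: "hausdorff_dist Z W = hausdorff_dist W Z"
  by (simp add: hausdorff_dist_def max.commute)

lemma infdist_le_hausdorff_dist:
  assumes "z \<in> Z" "hausdorff_dist Z W < \<infinity>"
  shows "infdist z W \<le> real_of_ereal (hausdorff_dist Z W)"
proof -
  have le: "ereal (infdist z W) \<le> hausdorff_dist Z W"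
    unfolding hausdorff_dist_def using assms(1) by (intro max.coboundedI1 SUP_upper) auto
  moreover have "hausdorff_dist Z W \<noteq> -\<infinity>"
    using le infdist_nonneg[of z W] by auto
  ultimately show ?thesis using assms(2) by (cases "hausdorff_dist Z W") auto
qed

lemma exterior_ball_imp_proximal_ineq:
  fixes v w :: "'a::real_inner"
  assumes "r > 0" "d > 0" "norm v = d" "r \<le> norm ((r / d) *\<^sub>R v + w)"
  shows "0 \<le> 2 * r * inner v w + d * (norm w)\<^sup>2"
proof -
  have "r\<^sup>2 \<le> (norm ((r / d) *\<^sub>R v + w))\<^sup>2"
    using assms by (simp add: power_mono)
  also have "\<dots> = r\<^sup>2 + 2 * (r / d) * inner v w + (norm w)\<^sup>2"
    using assms by (simp add: power2_norm_add power_mult_distrib)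
  finally have "0 \<le> d * (2 * (r / d) * inner v w + (norm w)\<^sup>2)"
    using assms by simp
  also have "\<dots> = 2 * r * inner v w + d * (norm w)\<^sup>2"
    using assms by (simp add: field_simps)
  finally show ?thesis .
qed

lemma proximal_ineq_imp_zero:
  fixes v w :: "'a::real_inner"
  assumes "0 \<le> 2 * r * inner v w + d * (norm w)\<^sup>2"
    and "norm v = d" "norm (v + w) = d" "d < r"
  shows "w = 0"
proof -
  have "2 * inner v w = - (norm w)\<^sup>2"
    using assms(2,3) power2_norm_add[of v w] by simp
  then have "0 \<le> (d - r) * (norm w)\<^sup>2"
    using assms(1) by (simp add: algebra_simps)
  with \<open>d < r\<close> have "(norm w)\<^sup>2 \<le> 0" by (simp add: zero_le_mult_iff)
  then show ?thesis by simp
qed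

lemma prox_regular_proximal_ineq:
  fixes Z :: "'a::real_inner set"
  assumes "prox_regular r Z" "r > 0" "\<zeta> \<in> Z" "norm (y - \<zeta>) = infdist y Z"
    and "infdist y Z < r" "z \<in> Z"
  shows "0 \<le> 2 * r * inner (y - \<zeta>) (\<zeta> - z) + norm (y - \<zeta>) * (norm (\<zeta> - z))\<^sup>2"
proof (cases "infdist y Z = 0")
  case True
  then show ?thesis using assms(4) by simp
next
  case False
  define d where "d = infdist y Z"
  have "d > 0" using False infdist_nonneg[of y Z] d_def by linarith
  then obtain x where "x \<in> Z"
    and ball: "infdist (x + (r / d) *\<^sub>R (y - x)) Z = (r / d) * norm (y - x)"
    and rad: "(r / d) * norm (y - x) = r"
    using assms unfolding prox_regular_def d_def by blast
  have "norm (y - x) = d" using rad \<open>d > 0\<close> \<open>r > 0\<close> by (simp add: field_simps)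
  have proximal: "0 \<le> 2 * r * inner (y - x) (x - z') + d * (norm (x - z'))\<^sup>2" if "z' \<in> Z" for z'
  proof (rule exterior_ball_imp_proximal_ineq)
    have "r \<le> norm (x + (r / d) *\<^sub>R (y - x) - z')"
      using infdist_le[OF that, of "x + (r / d) *\<^sub>R (y - x)"] ball rad by (simp add: dist_norm)
    also have "x + (r / d) *\<^sub>R (y - x) - z' = (r / d) *\<^sub>R (y - x) + (x - z')" by simp
    finally show "r \<le> norm ((r / d) *\<^sub>R (y - x) + (x - z'))" .
  qed (use \<open>r > 0\<close> \<open>d > 0\<close> \<open>norm (y - x) = d\<close> in auto)
  \<comment> \<open>the exterior-ball witness is the nearest point itself, because \<open>d < r\<close>\<close>
  have "x - \<zeta> = 0"
    using proximal_ineq_imp_zero[OF proximal] assms \<open>norm (y - x) = d\<close> d_def by auto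
  then show ?thesis using proximal[OF \<open>z \<in> Z\<close>] assms(4) d_def by simp
qed

lemma proximal_ineqs_add:
  fixes p1 p2 u e a b :: "'a::real_inner"
  assumes "r > 0"
    and ineq1: "0 \<le> 2 * r * inner p1 (e + a) + norm p1 * (norm (e + a))\<^sup>2"
    and ineq2: "0 \<le> 2 * r * inner p2 (b - e) + norm p2 * (norm (b - e))\<^sup>2"
    and "p1 - p2 = u - e"
  shows "2 * r * (norm e)\<^sup>2 \<le> 2 * r * norm u * norm e + 2 * r * (norm p1 * norm a + norm p2 * norm b)
    + norm p1 * (norm e + norm a)\<^sup>2 + norm p2 * (norm e + norm b)\<^sup>2"
proof -
  have "inner p1 (e + a) + inner p2 (b - e) = inner (p1 - p2) e + inner p1 a + inner p2 b"
    by (simp add: inner_add_right inner_diff_right inner_diff_left)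
  also have "\<dots> = inner u e - (norm e)\<^sup>2 + inner p1 a + inner p2 b"
    by (simp add: assms(4) inner_diff_left power2_norm_eq_inner)
  finally have inner_sum: "inner p1 (e + a) + inner p2 (b - e)
      = inner u e - (norm e)\<^sup>2 + inner p1 a + inner p2 b" .
  have "inner u e + inner p1 a + inner p2 b \<le> norm u * norm e + norm p1 * norm a + norm p2 * norm b"
    using norm_cauchy_schwarz[of u e] norm_cauchy_schwarz[of p1 a] norm_cauchy_schwarz[of p2 b]
    by linarith
  then have cauchy_schwarz: "2 * r * (inner u e + inner p1 a + inner p2 b)
      \<le> 2 * r * (norm u * norm e + norm p1 * norm a + norm p2 * norm b)"
    using \<open>r > 0\<close> by simp
  have "norm p1 * (norm (e + a))\<^sup>2 \<le> norm p1 * (norm e + norm a)\<^sup>2"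
    by (intro mult_left_mono power_mono norm_triangle_ineq) auto
  moreover have "norm p2 * (norm (b - e))\<^sup>2 \<le> norm p2 * (norm e + norm b)\<^sup>2"
    using norm_triangle_ineq4[of b e] by (intro mult_left_mono power_mono) auto
  moreover have "0 \<le> 2 * r * (inner p1 (e + a) + inner p2 (b - e))
      + norm p1 * (norm (e + a))\<^sup>2 + norm p2 * (norm (b - e))\<^sup>2"
    unfolding distrib_left using ineq1 ineq2 by linarith
  then have "0 \<le> 2 * r * (inner u e - (norm e)\<^sup>2 + inner p1 a + inner p2 b)
      + norm p1 * (norm (e + a))\<^sup>2 + norm p2 * (norm (b - e))\<^sup>2"
    unfolding inner_sum .
  ultimately show ?thesis using cauchy_schwarz by (simp add: algebra_simps)
qed

lemma proximal_sum_estimate: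
  fixes E U A B d1 d2 r h :: real
  assumes "r > 0" "0 \<le> d1" "d1 \<le> r / 2" "0 \<le> d2" "d2 \<le> r / 2"
    and "0 \<le> A" "A \<le> 2 * h" "0 \<le> B" "B \<le> 2 * h"
    and sum: "2 * r * E\<^sup>2 \<le> 2 * r * U * E + 2 * r * (d1 * A + d2 * B) + d1 * (E + A)\<^sup>2 + d2 * (E + B)\<^sup>2"
  shows "E\<^sup>2 \<le> 16 * U\<^sup>2 + 16 * r * h + 48 * h\<^sup>2"
proof -
  have quadratic: "d * (E + D)\<^sup>2 \<le> r / 2 * (3 / 2 * E\<^sup>2 + 12 * h\<^sup>2)"
    if "0 \<le> d" "d \<le> r / 2" "0 \<le> D" "D \<le> 2 * h" for d D
  proof -
    have "0 \<le> (E / 2 - D)\<^sup>2" by simp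
    moreover have "D\<^sup>2 \<le> (2 * h)\<^sup>2" using that by (intro power_mono) auto
    ultimately have "(E + D)\<^sup>2 \<le> 3 / 2 * E\<^sup>2 + 12 * h\<^sup>2"
      by (simp add: power2_eq_square algebra_simps)
    then show ?thesis using that by (intro mult_mono) auto
  qed
  have linear: "d * D \<le> r * h" if "0 \<le> d" "d \<le> r / 2" "0 \<le> D" "D \<le> 2 * h" for d D
    using mult_mono[OF that(2,4)] that \<open>r > 0\<close> by simp
  have "2 * r * (d1 * A + d2 * B) \<le> 2 * r * (2 * r * h)"
    using linear[of d1 A] linear[of d2 B] assms by simp
  then have "r * (E\<^sup>2 / 2) \<le> r * (2 * U * E + 4 * r * h + 12 * h\<^sup>2)"
    using sum quadratic[of d1 A] quadratic[of d2 B] assms by (simp add: algebra_simps)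
  then have "E\<^sup>2 / 2 \<le> 2 * U * E + 4 * r * h + 12 * h\<^sup>2"
    using \<open>r > 0\<close> by simp
  moreover have "2 * U * E \<le> 4 * U\<^sup>2 + E\<^sup>2 / 4"
    using zero_le_power2[of "2 * U - E / 2"] by (simp add: power2_eq_square algebra_simps)
  ultimately show ?thesis by simp
qed

lemma prox_regular_nearest_points_dist:
  fixes Z1 Z2 :: "'a::real_inner set"
  assumes "r > 0" "prox_regular r Z1" "prox_regular r Z2"
    and "\<zeta>1 \<in> Z1" "norm (y1 - \<zeta>1) = infdist y1 Z1" "infdist y1 Z1 \<le> r / 2"
    and "\<zeta>2 \<in> Z2" "norm (y2 - \<zeta>2) = infdist y2 Z2" "infdist y2 Z2 \<le> r / 2"
    and "z1 \<in> Z1" "norm (\<zeta>2 - z1) \<le> 2 * h"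
    and "z2 \<in> Z2" "norm (\<zeta>1 - z2) \<le> 2 * h"
  shows "(norm (\<zeta>1 - \<zeta>2))\<^sup>2 \<le> 16 * (norm (y1 - y2))\<^sup>2 + 16 * r * h + 48 * h\<^sup>2"
proof (rule proximal_sum_estimate)
  have "0 \<le> 2 * r * inner (y1 - \<zeta>1) (\<zeta>1 - z1) + norm (y1 - \<zeta>1) * (norm (\<zeta>1 - z1))\<^sup>2"
    using assms by (intro prox_regular_proximal_ineq[of r Z1]) auto
  moreover have "\<zeta>1 - z1 = (\<zeta>1 - \<zeta>2) + (\<zeta>2 - z1)" by simp
  moreover have "0 \<le> 2 * r * inner (y2 - \<zeta>2) (\<zeta>2 - z2) + norm (y2 - \<zeta>2) * (norm (\<zeta>2 - z2))\<^sup>2"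
    using assms by (intro prox_regular_proximal_ineq[of r Z2]) auto
  moreover have "\<zeta>2 - z2 = (\<zeta>1 - z2) - (\<zeta>1 - \<zeta>2)" by simp
  moreover have "(y1 - \<zeta>1) - (y2 - \<zeta>2) = (y1 - y2) - (\<zeta>1 - \<zeta>2)" by simp
  ultimately show "2 * r * (norm (\<zeta>1 - \<zeta>2))\<^sup>2 \<le> 2 * r * norm (y1 - y2) * norm (\<zeta>1 - \<zeta>2)
      + 2 * r * (norm (y1 - \<zeta>1) * norm (\<zeta>2 - z1) + norm (y2 - \<zeta>2) * norm (\<zeta>1 - z2))
      + norm (y1 - \<zeta>1) * (norm (\<zeta>1 - \<zeta>2) + norm (\<zeta>2 - z1))\<^sup>2
      + norm (y2 - \<zeta>2) * (norm (\<zeta>1 - \<zeta>2) + norm (\<zeta>1 - z2))\<^sup>2"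
    using proximal_ineqs_add[OF \<open>r > 0\<close>] by metis
qed (use assms infdist_nonneg in auto)

theorem lemma4p3:
  fixes r :: real
  assumes "r > 0"
  shows "\<exists>C>0. \<forall>(Z1::'a::{real_inner,complete_space} set) Z2 \<delta>.
           Z1 \<noteq> {} \<and> Z2 \<noteq> {} \<and> closed Z1 \<and> closed Z2 \<and>
           prox_regular r Z1 \<and> prox_regular r Z2 \<and>
           hausdorff_dist Z1 Z2 < \<infinity> \<and> 0 < \<delta> \<and> \<delta> \<le> r / 2 \<longrightarrow>
           (\<forall>y1 y2 \<zeta>1 \<zeta>2.
              infdist y1 Z1 \<le> \<delta> \<and> infdist y2 Z2 \<le> \<delta> \<and>
              \<zeta>1 \<in> Z1 \<and> norm (y1 - \<zeta>1) = infdist y1 Z1 \<and>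
              \<zeta>2 \<in> Z2 \<and> norm (y2 - \<zeta>2) = infdist y2 Z2 \<longrightarrow>
              (norm (\<zeta>1 - \<zeta>2))\<^sup>2 \<le>
                C * ((norm (y1 - y2))\<^sup>2 + (real_of_ereal (hausdorff_dist Z1 Z2))\<^sup>2
                     + real_of_ereal (hausdorff_dist Z1 Z2)))"
proof (intro exI[of _ "48 + 16 * r"] conjI allI impI)
  show "0 < 48 + 16 * r" using assms by simp
  fix Z1 Z2 :: "'a set" and \<delta> :: real and y1 y2 \<zeta>1 \<zeta>2
  assume sets: "Z1 \<noteq> {} \<and> Z2 \<noteq> {} \<and> closed Z1 \<and> closed Z2 \<and>
           prox_regular r Z1 \<and> prox_regular r Z2 \<and>
           hausdorff_dist Z1 Z2 < \<infinity> \<and> 0 < \<delta> \<and> \<delta> \<le> r / 2"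
    and points: "infdist y1 Z1 \<le> \<delta> \<and> infdist y2 Z2 \<le> \<delta> \<and>
              \<zeta>1 \<in> Z1 \<and> norm (y1 - \<zeta>1) = infdist y1 Z1 \<and>
              \<zeta>2 \<in> Z2 \<and> norm (y2 - \<zeta>2) = infdist y2 Z2"
  define h where "h = real_of_ereal (hausdorff_dist Z1 Z2)"
  have near1: "infdist \<zeta>2 Z1 \<le> h"
    using infdist_le_hausdorff_dist[of \<zeta>2 Z2 Z1] hausdorff_dist_commute[of Z1 Z2] sets points
    by (simp add: h_def)
  have near2: "infdist \<zeta>1 Z2 \<le> h"
    using infdist_le_hausdorff_dist[of \<zeta>1 Z1 Z2] sets points by (simp add: h_def)
  have "0 \<le> h" using near1 infdist_nonneg[of \<zeta>2 Z1] by linarith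
  obtain z1 where "z1 \<in> Z1" "norm (\<zeta>2 - z1) \<le> 2 * h"
    using closed_infdist_le_obtain[OF _ _ near1] sets by blast
  obtain z2 where "z2 \<in> Z2" "norm (\<zeta>1 - z2) \<le> 2 * h"
    using closed_infdist_le_obtain[OF _ _ near2] sets by blast
  have "(norm (\<zeta>1 - \<zeta>2))\<^sup>2 \<le> 16 * (norm (y1 - y2))\<^sup>2 + 16 * r * h + 48 * h\<^sup>2"
    by (rule prox_regular_nearest_points_dist[of r Z1 Z2])
      (use assms sets points \<open>z1 \<in> Z1\<close> \<open>z2 \<in> Z2\<close> \<open>norm (\<zeta>2 - z1) \<le> 2 * h\<close>
        \<open>norm (\<zeta>1 - z2) \<le> 2 * h\<close> in auto)
  also have "\<dots> \<le> (48 + 16 * r) * ((norm (y1 - y2))\<^sup>2 + h\<^sup>2 + h)"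
  proof -
    have "16 * U + 16 * r * h + 48 * h\<^sup>2 \<le> (48 + 16 * r) * (U + h\<^sup>2 + h)" if "0 \<le> U" for U
      using that \<open>0 \<le> h\<close> assms by (simp add: algebra_simps)
    then show ?thesis by simp
  qed
  finally show "(norm (\<zeta>1 - \<zeta>2))\<^sup>2 \<le> (48 + 16 * r) *
      ((norm (y1 - y2))\<^sup>2 + (real_of_ereal (hausdorff_dist Z1 Z2))\<^sup>2 + real_of_ereal (hausdorff_dist Z1 Z2))"
    unfolding h_def .
qed

end
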